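(* Let $r\in\mathbb{N}$ with $r\ge 2$. Let $B$ be the squarefree sequence over $C_2^r$ whose set of terms is $C_2^{r}\setminus \{0\}$ (each non-zero element occurring exactly once). Then $B$ is a zero-sum sequence and $\max \mathsf{L}(B) = \lfloor (2^r - 1)/3 \rfloor$.
   Context: $C_2^r$ is the elementary abelian $2$-group of rank $r$. A sequence is a finite unordered list of group elements with repetitions; squarefree means no repetitions; a minimal zero-sum sequence is a non-empty sequence with sum $0$ having no proper non-empty zero-sum subsequence; for a zero-sum sequence $B$, $\mathsf{L}(B)$ is the set of all $t$ such that $B$ can be written as a product of $t$ minimal zero-sum sequences. *)

theory Defs
  imports "HOL-Library.Z2" "HOL-Library.Multiset" "HOL-Analysis.Finite_Cartesian_Product"
begin

text \<open>The elementary abelian 2-group of rank r is modelled as bit ^ 'n with r = CARD('n):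
  vectors over the field Z/2Z (type bit) indexed by a finite type 'n, with pointwise addition.\<close>

definition zero_sum_seq :: "'a::comm_monoid_add multiset \<Rightarrow> bool" where
  "zero_sum_seq S \<longleftrightarrow> sum_mset S = 0"

definition minimal_zero_sum_seq :: "'a::comm_monoid_add multiset \<Rightarrow> bool" where
  "minimal_zero_sum_seq S \<longleftrightarrow> S \<noteq> {#} \<and> zero_sum_seq S \<and>
     (\<forall>T. T \<subseteq># S \<and> T \<noteq> {#} \<and> zero_sum_seq T \<longrightarrow> T = S)"

definition lengths :: "'a::comm_monoid_add multiset \<Rightarrow> nat set" where
  "lengths B = {t. \<exists>F :: 'a multiset multiset.
      (\<forall>A \<in># F. minimal_zero_sum_seq A) \<and> \<Sum>\<^sub># F = B \<and> size F = t}"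

end

theory Submission
  imports Defs "HOL-Library.Function_Algebras"
begin

text \<open>Every minimal zero-sum subsequence of a squarefree sequence of non-zero elements of an
  elementary abelian 2-group has length at least 3, so no factorization of B has more than
  (2^r - 1) div 3 factors. Conversely, B is factorized into blocks of length 3 and 4 by induction
  r \<mapsto> r + 2 from r = 2, 3: writing the new elements as the cosets V + u, V + v, V + u + v of the old
  space V, one adds the triangles {x + u, \<phi> x + v, x + \<phi> x + u + v} for a permutation \<phi> of V
  such that x \<mapsto> x + \<phi> x is also a permutation. Such blocks are minimal because any proper
  zero-sum part would split them into two parts of length at least 3.\<close>

definition short_factorization :: "'a::comm_monoid_add multiset \<Rightarrow> 'a multiset multiset \<Rightarrow> bool" where
  "short_factorization B F \<longleftrightarrow>
     (\<forall>A\<in>#F. A \<noteq> {#} \<and> size A \<le> 4 \<and> sum_mset A = 0) \<and> \<Sum>\<^sub># F = B"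

lemma zero_sum_subseq_size_ge_3:
  fixes A B :: "'a::comm_monoid_add multiset"
  assumes self_inverse: "\<And>x::'a. x + x = 0" and squarefree: "\<And>x. count B x \<le> 1"
    and zero_free: "0 \<notin># B" and "A \<subseteq># B" "A \<noteq> {#}" "sum_mset A = 0"
  shows "3 \<le> size A"
proof (rule ccontr)
  assume "\<not> 3 \<le> size A"
  moreover obtain a A' where A: "A = add_mset a A'"
    using \<open>A \<noteq> {#}\<close> by (metis multiset_cases)
  ultimately have "size A' \<le> 1" by simp
  then consider "A' = {#}" | b where "A' = {#b#}"
    by (metis le_Suc_eq One_nat_def size_1_singleton_mset size_eq_0_iff_empty le_zero_eq)
  then consider "A = {#a#}" | b where "A = {#a, b#}" using A by metis
  then show False
  proof cases
    case 1
    then show False using assms by (simp add: mset_subset_eq_single)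
  next
    case (2 b)
    have "b = (a + a) + b" using self_inverse by simp
    also have "\<dots> = a" using 2 \<open>sum_mset A = 0\<close> by (simp add: add.assoc)
    finally have "count A a = 2" using 2 by simp
    moreover have "count A a \<le> count B a" using \<open>A \<subseteq># B\<close> by (simp add: mset_subset_eq_count)
    ultimately show False using squarefree[of a] by simp
  qed
qed

lemma short_zero_sum_subseq_minimal:
  fixes A B :: "'a::comm_monoid_add multiset"
  assumes self_inverse: "\<And>x::'a. x + x = 0" and squarefree: "\<And>x. count B x \<le> 1"
    and zero_free: "0 \<notin># B" and "A \<subseteq># B" "A \<noteq> {#}" "sum_mset A = 0" "size A \<le> 4"
  shows "minimal_zero_sum_seq A"
  unfolding minimal_zero_sum_seq_def zero_sum_seq_def
proof (intro conjI allI impI)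
  fix T assume T: "T \<subseteq># A \<and> T \<noteq> {#} \<and> sum_mset T = 0"
  show "T = A"
  proof (rule ccontr)
    assume "T \<noteq> A"
    define U where "U = A - T"
    have A_eq: "A = T + U" using T by (simp add: U_def subset_mset.add_diff_inverse)
    then have "U \<noteq> {#}" "U \<subseteq># A" "sum_mset U = 0"
      using \<open>T \<noteq> A\<close> T \<open>sum_mset A = 0\<close> by auto
    then have "3 \<le> size U"
      using zero_sum_subseq_size_ge_3[OF self_inverse squarefree zero_free] \<open>A \<subseteq># B\<close>
      by (meson subset_mset.order_trans)
    moreover have "3 \<le> size T"
      using zero_sum_subseq_size_ge_3[OF self_inverse squarefree zero_free] T \<open>A \<subseteq># B\<close>
      by (meson subset_mset.order_trans)
    ultimately show False using A_eq \<open>size A \<le> 4\<close> by simp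
  qed
qed (use assms in auto)

lemma zero_sum_seq_if_short_factorization:
  assumes "short_factorization B F"
  shows "zero_sum_seq B"
proof -
  have "\<forall>A\<in>#F. sum_mset A = 0" using assms by (simp add: short_factorization_def)
  then have "sum_mset (\<Sum>\<^sub># F) = 0" by (induction F) simp_all
  then show ?thesis using assms by (simp add: short_factorization_def zero_sum_seq_def)
qed

lemma size_in_lengths_if_short_factorization:
  fixes B :: "'a::comm_monoid_add multiset"
  assumes self_inverse: "\<And>x::'a. x + x = 0" and squarefree: "\<And>x. count B x \<le> 1"
    and zero_free: "0 \<notin># B" and "short_factorization B F"
  shows "size F \<in> lengths B"
proof -
  have "minimal_zero_sum_seq A" if "A \<in># F" for A
  proof (rule short_zero_sum_subseq_minimal[OF self_inverse squarefree zero_free])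
    show "A \<subseteq># B"
      using that \<open>short_factorization B F\<close> unfolding short_factorization_def
      by (metis mset_subset_eq_add_left multi_member_split sum_mset.add_mset)
  qed (use that \<open>short_factorization B F\<close> in \<open>auto simp: short_factorization_def\<close>)
  then show ?thesis
    using \<open>short_factorization B F\<close> unfolding lengths_def short_factorization_def by blast
qed

lemma three_times_lengths_le_size:
  fixes B :: "'a::comm_monoid_add multiset"
  assumes self_inverse: "\<And>x::'a. x + x = 0" and squarefree: "\<And>x. count B x \<le> 1"
    and zero_free: "0 \<notin># B" and "t \<in> lengths B"
  shows "3 * t \<le> size B"
proof -
  obtain F where F: "\<forall>A\<in>#F. minimal_zero_sum_seq A" "\<Sum>\<^sub># F = B" "size F = t"
    using \<open>t \<in> lengths B\<close> unfolding lengths_def by blast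
  have "3 \<le> size A" if "A \<in># F" for A
  proof (rule zero_sum_subseq_size_ge_3[OF self_inverse squarefree zero_free])
    show "A \<subseteq># B" using that F(2) by (metis mset_subset_eq_add_left multi_member_split sum_mset.add_mset)
  qed (use that F(1) in \<open>auto simp: minimal_zero_sum_seq_def zero_sum_seq_def\<close>)
  then have "(\<Sum>A\<in>#F. 3) \<le> (\<Sum>A\<in>#F. size A)" by (rule sum_mset_mono)
  then show ?thesis using F(2,3) by (auto simp: sum_mset_constant mult.commute)
qed

lemma short_factorization_image:
  fixes \<psi> :: "'a::comm_monoid_add \<Rightarrow> 'b::comm_monoid_add"
  assumes "\<psi> 0 = 0" and additive: "\<And>a b. \<psi> (a + b) = \<psi> a + \<psi> b"
    and "short_factorization B F"
  shows "short_factorization (image_mset \<psi> B) (image_mset (image_mset \<psi>) F)"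
proof -
  have sum_image: "sum_mset (image_mset \<psi> A) = \<psi> (sum_mset A)" for A
    by (induction A) (simp_all add: \<open>\<psi> 0 = 0\<close> additive)
  have "\<Sum>\<^sub># (image_mset (image_mset \<psi>) F) = image_mset \<psi> (\<Sum>\<^sub># F)"
    by (induction F) simp_all
  then show ?thesis
    using \<open>short_factorization B F\<close> by (auto simp: short_factorization_def sum_image \<open>\<psi> 0 = 0\<close>)
qed

lemma image_mset_mset_set_bij_betw_self:
  "bij_betw f A A \<Longrightarrow> image_mset f (mset_set A) = mset_set A"
  by (simp add: bij_betw_def image_mset_mset_set)

lemma short_factorization_add_triangles:
  fixes \<phi> :: "'a::comm_monoid_add \<Rightarrow> 'a"
  assumes self_inverse: "\<And>x::'a. x + x = 0"
    and "bij_betw \<phi> W W" "bij_betw (\<lambda>x. x + \<phi> x) W W" "short_factorization B F"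
  shows "short_factorization
     (B + image_mset (\<lambda>x. x + u) (mset_set W) + image_mset (\<lambda>x. x + v) (mset_set W)
        + image_mset (\<lambda>x. x + (u + v)) (mset_set W))
     (F + image_mset (\<lambda>x. {#x + u, \<phi> x + v, (x + \<phi> x) + (u + v)#}) (mset_set W))"
proof -
  let ?M = "mset_set W"
  have triangle_sum: "(x + u) + (\<phi> x + v) + ((x + \<phi> x) + (u + v)) = 0" for x
  proof -
    have "(x + u) + (\<phi> x + v) + ((x + \<phi> x) + (u + v))
        = (x + x) + (\<phi> x + \<phi> x) + (u + u) + (v + v)" by (simp add: ac_simps)
    then show ?thesis by (simp add: self_inverse)
  qed
  have "\<Sum>\<^sub># (image_mset (\<lambda>x. {#x + u, \<phi> x + v, (x + \<phi> x) + (u + v)#}) M)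
      = image_mset (\<lambda>x. x + u) M + image_mset (\<lambda>x. x + v) (image_mset \<phi> M)
        + image_mset (\<lambda>x. x + (u + v)) (image_mset (\<lambda>x. x + \<phi> x) M)" for M
    by (induction M) (simp_all add: ac_simps)
  then have "\<Sum>\<^sub># (image_mset (\<lambda>x. {#x + u, \<phi> x + v, (x + \<phi> x) + (u + v)#}) ?M)
      = image_mset (\<lambda>x. x + u) ?M + image_mset (\<lambda>x. x + v) ?M
        + image_mset (\<lambda>x. x + (u + v)) ?M"
    using assms(2,3) by (simp only: image_mset_mset_set_bij_betw_self)
  then show ?thesis
    using \<open>short_factorization B F\<close>
    by (auto simp: short_factorization_def triangle_sum[simplified add.assoc] add.assoc)
qed

declare add_bit_eq_xor [simp del]

lemma bit_add_self [simp]: "(a :: bit) + a = 0"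
  by (cases a) simp_all

lemma bit_add_eq_0_iff: "(a :: bit) + b = 0 \<longleftrightarrow> a = b"
  by (cases a; cases b) simp_all

lemma add_self_bit_fun [simp]: "(x :: nat \<Rightarrow> bit) + x = 0"
  by (simp add: fun_eq_iff)

lemma card_UNIV_bit: "CARD(bit) = 2"
proof -
  have "(UNIV :: bit set) = {0, 1}" using bit_not_zero_iff by blast
  then have "CARD(bit) = card {0 :: bit, 1}" by (simp only:)
  then show ?thesis by simp
qed

definition cube :: "nat \<Rightarrow> (nat \<Rightarrow> bit) set" where
  "cube r = {x. \<forall>i\<ge>r. x i = 0}"

definition unit_vec :: "nat \<Rightarrow> nat \<Rightarrow> bit" where
  "unit_vec k = (\<lambda>i. if i = k then 1 else 0)"

lemma cube_0: "cube 0 = {0}"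
  by (auto simp: cube_def fun_eq_iff)

lemma cube_Suc: "cube (Suc r) = cube r \<union> (\<lambda>x. x + unit_vec r) ` cube r"
proof (intro equalityI subsetI)
  fix x assume x: "x \<in> cube (Suc r)"
  show "x \<in> cube r \<union> (\<lambda>x. x + unit_vec r) ` cube r"
  proof (cases "x r = 0")
    case True
    have "x i = 0" if "r \<le> i" for i
      using that x True by (cases "i = r") (auto simp: cube_def)
    then show ?thesis by (simp add: cube_def)
  next
    case False
    then have "x + unit_vec r \<in> cube r" using x by (auto simp: cube_def unit_vec_def le_Suc_eq)
    moreover have "x = (x + unit_vec r) + unit_vec r" by (simp add: add.assoc)
    ultimately show ?thesis by blast
  qed
qed (auto simp: cube_def unit_vec_def)

lemma cube_disjoint_translate: "cube r \<inter> (\<lambda>x. x + unit_vec r) ` cube r = {}"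
  by (auto simp: cube_def unit_vec_def)

lemma finite_cube: "finite (cube r)"
  by (induction r) (simp_all add: cube_0 cube_Suc)

lemma zero_in_cube [simp]: "0 \<in> cube r"
  by (simp add: cube_def)

lemma inj_on_translate: "inj_on (\<lambda>x. x + (c :: 'a :: cancel_semigroup_add)) A"
  by (rule inj_onI) simp

lemma mset_set_cube_Suc:
  "mset_set (cube (Suc r)) = mset_set (cube r) + image_mset (\<lambda>x. x + unit_vec r) (mset_set (cube r))"
  unfolding cube_Suc
  by (simp add: mset_set_Union finite_cube cube_disjoint_translate image_mset_mset_set[OF inj_on_translate])

lemma card_cube: "card (cube r) = 2 ^ r"
  by (induction r) (simp_all add: cube_0 flip: size_mset_set add: mset_set_cube_Suc)

lemma mset_set_cube_Suc_diff_zero: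
  "mset_set (cube (Suc r) - {0})
     = mset_set (cube r - {0}) + image_mset (\<lambda>x. x + unit_vec r) (mset_set (cube r))"
proof -
  have "cube (Suc r) - {0} = (cube r - {0}) \<union> (\<lambda>x. x + unit_vec r) ` cube r"
    using cube_disjoint_translate[of r] zero_in_cube unfolding cube_Suc by blast
  then show ?thesis
    using cube_disjoint_translate[of r]
    by (simp add: mset_set_Union finite_cube Diff_Int_distrib2 image_mset_mset_set[OF inj_on_translate])
qed

lemma mset_set_cube_Suc_Suc_diff_zero:
  "mset_set (cube (Suc (Suc r)) - {0})
     = mset_set (cube r - {0})
       + image_mset (\<lambda>x. x + unit_vec r) (mset_set (cube r))
       + image_mset (\<lambda>x. x + unit_vec (Suc r)) (mset_set (cube r))
       + image_mset (\<lambda>x. x + (unit_vec r + unit_vec (Suc r))) (mset_set (cube r))"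
  by (simp add: mset_set_cube_Suc_diff_zero mset_set_cube_Suc image_mset.compositionality
      comp_def add.assoc)

lemma inj_on_additive_if_trivial_kernel:
  fixes h :: "'a::ab_group_add \<Rightarrow> 'b::ab_group_add"
  assumes additive: "\<And>a b. h (a + b) = h a + h b"
    and diff_closed: "\<And>x y. x \<in> W \<Longrightarrow> y \<in> W \<Longrightarrow> x - y \<in> W"
    and kernel: "\<And>x. x \<in> W \<Longrightarrow> h x = 0 \<Longrightarrow> x = 0"
  shows "inj_on h W"
proof (rule inj_onI)
  fix x y assume "x \<in> W" "y \<in> W" "h x = h y"
  have "h (x - y) + h y = h x" by (metis additive diff_add_cancel)
  then have "h (x - y) = 0" using \<open>h x = h y\<close> by simp
  then show "x = y" using kernel[OF diff_closed[OF \<open>x \<in> W\<close> \<open>y \<in> W\<close>]] by simp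
qed

lemma cube_diff_closed: "x \<in> cube r \<Longrightarrow> y \<in> cube r \<Longrightarrow> x - y \<in> cube r"
  by (simp add: cube_def)

lemma cube_add_closed: "x \<in> cube r \<Longrightarrow> y \<in> cube r \<Longrightarrow> x + y \<in> cube r"
  by (simp add: cube_def)

text \<open>Multiplication by t in GF(2)[t]/(t^r + t + 1), acting on coefficient vectors. As t and t + 1
  are both units modulo t^r + t + 1, both x \<mapsto> t x and x \<mapsto> x + t x permute the cube.\<close>

definition mult_by_t :: "nat \<Rightarrow> (nat \<Rightarrow> bit) \<Rightarrow> nat \<Rightarrow> bit" where
  "mult_by_t r x = (\<lambda>i. if i = 0 then x (r - 1) else if i = 1 then x 0 + x (r - 1)
                        else if i < r then x (i - 1) else 0)"

lemma mult_by_t_add: "mult_by_t r (x + y) = mult_by_t r x + mult_by_t r y"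
  by (simp add: mult_by_t_def fun_eq_iff ac_simps)

lemma mult_by_t_in_cube: "2 \<le> r \<Longrightarrow> mult_by_t r x \<in> cube r"
  by (simp add: mult_by_t_def cube_def)

lemma mult_by_t_eq_0_imp:
  assumes "2 \<le> r" "x \<in> cube r" "mult_by_t r x = 0"
  shows "x = 0"
proof -
  have coord: "mult_by_t r x i = 0" for i using assms(3) by simp
  have "x k = 0" for k
  proof -
    consider "k = 0" | "1 \<le> k" "k < r - 1" | "k = r - 1" | "r \<le> k" by linarith
    then show ?thesis
    proof cases
      case 1 then show ?thesis using coord[of 0] coord[of 1] assms(1) by (simp add: mult_by_t_def)
    next
      case 2
      then have "Suc k < r" by linarith
      then show ?thesis using coord[of "Suc k"] 2 by (simp add: mult_by_t_def)
    next
      case 3 then show ?thesis using coord[of 0] by (simp add: mult_by_t_def)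
    next
      case 4 then show ?thesis using assms(2) by (simp add: cube_def)
    qed
  qed
  then show ?thesis by (simp add: fun_eq_iff)
qed

lemma add_mult_by_t_eq_0_imp:
  assumes "2 \<le> r" "x \<in> cube r" "x + mult_by_t r x = 0"
  shows "x = 0"
proof -
  have coord: "x i = mult_by_t r x i" for i
    using fun_cong[OF assms(3), of i] by (simp add: bit_add_eq_0_iff)
  have x_0: "x 0 = x (r - 1)"
    using coord[of 0] by (simp add: mult_by_t_def)
  have x_1: "x 1 = 0"
    using coord[of 1] x_0 assms(1) by (simp add: mult_by_t_def)
  have x_shift: "x k = x (k - 1)" if "2 \<le> k" "k < r" for k
    using coord[of k] that by (simp add: mult_by_t_def)
  have middle: "x k = 0" if "1 \<le> k" "k < r" for k
    using that
  proof (induction k)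
    case (Suc k)
    then show ?case using x_1 x_shift[of "Suc k"] by (cases "k = 0") simp_all
  qed simp
  have "x 0 = 0" using x_0 middle[of "r - 1"] assms(1) by simp
  then have "x k = 0" for k
    using middle[of k] assms(2) by (cases "k = 0"; cases "k < r") (auto simp: cube_def)
  then show ?thesis by (simp add: fun_eq_iff)
qed

lemma bij_betw_cube_if_inj_on:
  "inj_on h (cube r) \<Longrightarrow> (\<And>x. x \<in> cube r \<Longrightarrow> h x \<in> cube r)
    \<Longrightarrow> bij_betw h (cube r) (cube r)"
  by (simp add: bij_betw_def endo_inj_surj finite_cube image_subsetI)

lemma bij_betw_mult_by_t: "2 \<le> r \<Longrightarrow> bij_betw (mult_by_t r) (cube r) (cube r)"
  by (intro bij_betw_cube_if_inj_on inj_on_additive_if_trivial_kernel)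
    (auto simp: mult_by_t_add mult_by_t_in_cube cube_diff_closed mult_by_t_eq_0_imp)

lemma bij_betw_add_mult_by_t: "2 \<le> r \<Longrightarrow> bij_betw (\<lambda>x. x + mult_by_t r x) (cube r) (cube r)"
  by (intro bij_betw_cube_if_inj_on inj_on_additive_if_trivial_kernel)
    (auto simp: mult_by_t_add mult_by_t_in_cube cube_diff_closed cube_add_closed
      add_mult_by_t_eq_0_imp ac_simps)

lemma mset_set_cube_2_diff_zero:
  "mset_set (cube 2 - {0}) = {#unit_vec 0, unit_vec 1, unit_vec 0 + unit_vec 1#}"
  by (simp add: numeral_2_eq_2 mset_set_cube_Suc_diff_zero mset_set_cube_Suc cube_0 add.commute)

lemma short_factorization_cube_3:
  "short_factorization (mset_set (cube 3 - {0}))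
     {#{#unit_vec 0, unit_vec 1, unit_vec 0 + unit_vec 1#},
       image_mset (\<lambda>x. x + unit_vec 2) (mset_set (cube 2))#}"
proof -
  have cube_2: "mset_set (cube 2) = {#0, unit_vec 0, unit_vec 1, unit_vec 0 + unit_vec 1#}"
    by (simp add: numeral_2_eq_2 mset_set_cube_Suc cube_0 add.commute)
  have "mset_set (cube 3 - {0}) = mset_set (cube 2 - {0})
      + image_mset (\<lambda>x. x + unit_vec 2) (mset_set (cube 2))"
    using mset_set_cube_Suc_diff_zero[of 2] by (simp add: numeral_3_eq_3 numeral_2_eq_2)
  then show ?thesis
    unfolding short_factorization_def mset_set_cube_2_diff_zero cube_2 by (simp add: fun_eq_iff)
qed

lemma exists_short_factorization_cube:
  "2 \<le> r \<Longrightarrow> \<exists>F. short_factorization (mset_set (cube r - {0})) F \<and> size F = (2 ^ r - 1) div 3"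
proof (induction r rule: less_induct)
  case (less r)
  consider "r = 2" | "r = 3" | s where "r = Suc (Suc s)" "2 \<le> s"
    using \<open>2 \<le> r\<close> by (metis add_2_eq_Suc le_Suc_ex le_antisym not_less_eq_eq numeral_2_eq_2 numeral_3_eq_3)
  then show ?case
  proof cases
    case 1
    have "short_factorization (mset_set (cube r - {0}))
        {#{#unit_vec 0, unit_vec 1, unit_vec 0 + unit_vec 1#}#}"
      unfolding 1 short_factorization_def mset_set_cube_2_diff_zero by (simp add: fun_eq_iff)
    then show ?thesis using 1 by fastforce
  next
    case 2 then show ?thesis using short_factorization_cube_3 by fastforce
  next
    case (3 s)
    then obtain F where F: "short_factorization (mset_set (cube s - {0})) F" "size F = (2 ^ s - 1) div 3"
      using less.IH[of s] by (metis lessI less_SucI)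
    let ?G = "F + image_mset (\<lambda>x. {#x + unit_vec s, mult_by_t s x + unit_vec (Suc s),
        (x + mult_by_t s x) + (unit_vec s + unit_vec (Suc s))#}) (mset_set (cube s))"
    have "short_factorization (mset_set (cube r - {0})) ?G"
      unfolding \<open>r = Suc (Suc s)\<close> mset_set_cube_Suc_Suc_diff_zero
      by (rule short_factorization_add_triangles[OF add_self_bit_fun
            bij_betw_mult_by_t[OF \<open>2 \<le> s\<close>] bij_betw_add_mult_by_t[OF \<open>2 \<le> s\<close>] F(1)])
    moreover have "size ?G = (2 ^ r - 1) div 3"
      using F(2) by (simp add: card_cube \<open>r = Suc (Suc s)\<close>)
    ultimately show ?thesis by blast
  qed
qed

lemma exists_additive_bij_betw_cube_vec:
  "\<exists>\<psi> :: (nat \<Rightarrow> bit) \<Rightarrow> bit ^ 'n.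
     bij_betw \<psi> (cube CARD('n)) UNIV \<and> (\<forall>a b. \<psi> (a + b) = \<psi> a + \<psi> b)"
proof -
  obtain idx :: "'n \<Rightarrow> nat" where idx: "bij_betw idx UNIV {0..<CARD('n)}"
    using ex_bij_betw_finite_nat[of "UNIV :: 'n set"] by auto
  define \<psi> :: "(nat \<Rightarrow> bit) \<Rightarrow> bit ^ 'n" where "\<psi> x = (\<chi> i. x (idx i))" for x
  have "inj_on \<psi> (cube CARD('n))"
  proof (rule inj_onI)
    fix x y assume "x \<in> cube CARD('n)" "y \<in> cube CARD('n)" "\<psi> x = \<psi> y"
    have "x k = y k" for k
    proof (cases "k < CARD('n)")
      case True
      then obtain i where "k = idx i" using idx by (metis atLeastLessThan_iff bij_betw_iff_bijections le0)
      then show ?thesis using \<open>\<psi> x = \<psi> y\<close> by (simp add: \<psi>_def vec_eq_iff)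
    next
      case False
      then show ?thesis using \<open>x \<in> cube CARD('n)\<close> \<open>y \<in> cube CARD('n)\<close> by (simp add: cube_def)
    qed
    then show "x = y" by blast
  qed
  moreover have "v \<in> \<psi> ` cube CARD('n)" for v
  proof
    let ?x = "\<lambda>k. if k < CARD('n) then v $ inv_into UNIV idx k else 0"
    show "?x \<in> cube CARD('n)" by (simp add: cube_def)
    have "idx i < CARD('n)" for i using idx by (auto simp: bij_betw_def)
    then show "v = \<psi> ?x"
      using idx by (simp add: \<psi>_def vec_eq_iff bij_betw_def inv_into_f_f)
  qed
  ultimately show ?thesis
    by (intro exI[of _ \<psi>]) (auto simp: bij_betw_def \<psi>_def vec_eq_iff)
qed

lemma exists_short_factorization_vec:
  assumes "2 \<le> CARD('n)"
  shows "\<exists>F. short_factorization (mset_set (UNIV - {0} :: (bit ^ 'n) set)) F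
           \<and> size F = (2 ^ CARD('n) - 1) div 3"
proof -
  obtain F where F: "short_factorization (mset_set (cube CARD('n) - {0})) F"
      "size F = (2 ^ CARD('n) - 1) div 3"
    using exists_short_factorization_cube assms by blast
  obtain \<psi> :: "(nat \<Rightarrow> bit) \<Rightarrow> bit ^ 'n" where
    \<psi>: "bij_betw \<psi> (cube CARD('n)) UNIV" and additive: "\<And>a b. \<psi> (a + b) = \<psi> a + \<psi> b"
    using exists_additive_bij_betw_cube_vec by blast
  have "\<psi> 0 = 0" using additive[of 0 0] by simp
  have "bij_betw \<psi> (cube CARD('n) - {0}) (UNIV - {0})"
    by (rule bij_betw_DiffI[OF \<psi>]) (simp_all add: \<open>\<psi> 0 = 0\<close> bij_betw_singletonI)
  then have "image_mset \<psi> (mset_set (cube CARD('n) - {0})) = mset_set (UNIV - {0})"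
    by (simp add: bij_betw_def image_mset_mset_set)
  then show ?thesis
    using short_factorization_image[OF \<open>\<psi> 0 = 0\<close> additive F(1)] F(2) by (metis size_image_mset)
qed

theorem proposition7p6:
  fixes B :: "(bit ^ 'n) multiset"
  assumes "CARD('n) \<ge> 2"
    and "B = mset_set (UNIV - {0})"
  shows "zero_sum_seq B \<and>
         (2 ^ CARD('n) - 1) div 3 \<in> lengths B \<and>
         (\<forall>t \<in> lengths B. t \<le> (2 ^ CARD('n) - 1) div 3)"
proof -
  obtain F where F: "short_factorization B F" "size F = (2 ^ CARD('n) - 1) div 3"
    using exists_short_factorization_vec assms by blast
  have self_inverse: "x + x = 0" for x :: "bit ^ 'n" by (simp add: vec_eq_iff)
  have squarefree: "count B x \<le> 1" for x using assms(2) by (simp add: count_mset_set')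
  have zero_free: "0 \<notin># B" using assms(2) by (simp add: not_in_iff count_mset_set')
  have "size B = 2 ^ CARD('n) - 1"
    using assms(2) by (simp add: CARD_vec card_UNIV_bit card_Diff_singleton)
  then have "3 * t \<le> 2 ^ CARD('n) - 1" if "t \<in> lengths B" for t
    using three_times_lengths_le_size[OF self_inverse squarefree zero_free that] by simp
  then show ?thesis
    using zero_sum_seq_if_short_factorization[OF F(1)] F(2)
      size_in_lengths_if_short_factorization[OF self_inverse squarefree zero_free F(1)]
    by fastforce
qed

end
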